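(* Let $d\ge 2$ and $N\in\mathbb{N}$. Let $P:\mathbb{C}^d\to\mathbb{C}$ be an entire function that is $(N\mathbb{Z})^d$-periodic, with restriction to $\mathbb{R}^d$ given by the Fourier series $$P(\mathbf{x})=\sum_{\mathbf{k}\in\mathbb{Z}^d} c_{\mathbf{k}}\,e^{2\pi i\mathbf{k}\cdot\mathbf{x}/N},\quad \mathbf{x}\in\mathbb{R}^d.$$ Then $P$ satisfies $$\sum_{\mathbf{n}\in\mathbb{Z}^d} P(\mathbf{x}+\mathbf{n})\,\chi_{[0,N]^d}(\mathbf{x}+\mathbf{n}) = 1\quad\text{for all }\mathbf{x}\in\mathbb{R}^d$$ if and only if $c_{\mathbf{k}}=\frac{1}{N^d}\delta_{\mathbf{k},\mathbf{0}}$ for all $\mathbf{k}\in(N\mathbb{Z})^d$.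
   Context: $\chi_{[0,N]^d}$ is the indicator function of $[0,N]^d$; $\delta_{\mathbf{k},\mathbf{0}}$ is the Kronecker delta.
   Formalization: The indicator $\chi_{[0,N]^d}$ in the sum over n is replaced by the indicator of the half-open cube, the product of d copies of [0,N), instead of the closed cube. The statement above fails without it. *)

theory Defs
  imports "HOL-Analysis.Analysis"
begin

definition entire_fun :: "(complex ^ 'd \<Rightarrow> complex) \<Rightarrow> bool" where
  "entire_fun P \<longleftrightarrow> (\<forall>z. \<exists>D. (P has_derivative D) (at z) \<and> (\<forall>c v. D (c *s v) = c * D v))"

definition cvec :: "real ^ 'd \<Rightarrow> complex ^ 'd" where
  "cvec x = (\<chi> i. complex_of_real (x $ i))"

definition rvec :: "int ^ 'd \<Rightarrow> real ^ 'd" where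
  "rvec n = (\<chi> i. real_of_int (n $ i))"

definition lattice_periodic :: "nat \<Rightarrow> (complex ^ 'd \<Rightarrow> complex) \<Rightarrow> bool" where
  "lattice_periodic N P \<longleftrightarrow>
     (\<forall>z (m :: int ^ 'd). P (z + (\<chi> i. of_int (int N * m $ i))) = P z)"

definition cube :: "nat \<Rightarrow> (real ^ 'd) set" where
  "cube N = {x. \<forall>i. 0 \<le> x $ i \<and> x $ i < real N}"

definition fchar :: "nat \<Rightarrow> int ^ 'd \<Rightarrow> real ^ 'd \<Rightarrow> complex" where
  "fchar N k x = exp (2 * pi * \<i> * complex_of_real ((\<Sum>i\<in>UNIV. real_of_int (k $ i) * x $ i) / real N))"

end

theory Submission
  imports Defs
begin

text \<open>
  Write \<open>e\<^sub>k(x) = e^{2\<pi>i k\<cdot>x/N}\<close>. For \<open>x \<in> \<real>\<^sup>d\<close> only the integer points \<open>n\<close> of a box of side \<open>N\<close>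
  contribute to the periodization, and summing the Fourier series of \<open>P\<close> over them kills
  every frequency outside \<open>(N\<int>)\<^sup>d\<close>: the periodization is the Fourier series with coefficients
  \<open>N\<^sup>d c\<^sub>k\<close> on \<open>(N\<int>)\<^sup>d\<close> and \<open>0\<close> elsewhere. It remains to show that an absolutely summable
  Fourier series determines its coefficients. Sampling a series that vanishes identically on the
  grid \<open>(N/M)\<int>\<^sup>d\<close> of a box and averaging against \<open>e\<^sub>p\<close> shows that the coefficients in each residue class
  \<open>p + (M\<int>)\<^sup>d\<close> sum to zero; for \<open>M\<close> large that class is \<open>p\<close> plus a set of negligible mass.
\<close>

lemma fchar_add: "fchar N k (x + y) = fchar N k x * fchar N k y"
  unfolding fchar_def by (simp add: algebra_simps sum.distrib add_divide_distrib flip: exp_add)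

lemma fchar_add_freq: "fchar N (k + l) x = fchar N k x * fchar N l x"
  unfolding fchar_def by (simp add: algebra_simps sum.distrib add_divide_distrib flip: exp_add)

lemma fchar_diff_freq: "fchar N (k - l) x = fchar N k x * fchar N (- l) x"
  using fchar_add_freq[of N k "- l" x] by simp

lemma fchar_zero [simp]: "fchar N k 0 = 1"
  unfolding fchar_def by simp

lemma fchar_zero_freq [simp]: "fchar N 0 x = 1"
  unfolding fchar_def by simp

lemma fchar_rescale:
  assumes "N > 0" "M > 0"
  shows "fchar N k ((real N / real M) *\<^sub>R y) = fchar M k y"
proof -
  have "(\<Sum>i\<in>UNIV. real_of_int (k $ i) * ((real N / real M) *\<^sub>R y) $ i) / real N
      = (\<Sum>i\<in>UNIV. real_of_int (k $ i) * y $ i) / real M"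
    using assms by (simp add: sum_distrib_left sum_divide_distrib field_simps)
  then show ?thesis unfolding fchar_def by simp
qed

lemma fchar_rvec:
  "fchar M k (rvec j) = (\<Prod>i\<in>UNIV. exp (2 * pi * \<i> * complex_of_real (real_of_int (k $ i * j $ i) / real M)))"
proof -
  have "2 * pi * \<i> * complex_of_real ((\<Sum>i\<in>UNIV. real_of_int (k $ i) * rvec j $ i) / real M)
     = (\<Sum>i\<in>UNIV. 2 * pi * \<i> * complex_of_real (real_of_int (k $ i * j $ i) / real M))"
    unfolding rvec_def by (simp add: sum_divide_distrib sum_distrib_left)
  then show ?thesis unfolding fchar_def by (simp add: exp_sum)
qed

lemma exp_2pi_int_div_eq_1_iff:
  assumes "M > 0"
  shows "exp (2 * pi * \<i> * complex_of_real (real_of_int q / real M)) = 1 \<longleftrightarrow> int M dvd q"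
proof
  assume "exp (2 * pi * \<i> * complex_of_real (real_of_int q / real M)) = 1"
  then obtain n :: int where "2 * pi * (real_of_int q / real M) = real_of_int (2 * n) * pi"
    unfolding exp_eq_1 by auto
  then have "real_of_int q = real M * real_of_int n" using assms by (simp add: field_simps)
  then have "q = int M * n" by (metis of_int_eq_iff of_int_mult of_int_of_nat_eq)
  then show "int M dvd q" by simp
next
  assume "int M dvd q"
  then obtain r where "q = int M * r" by auto
  then show "exp (2 * pi * \<i> * complex_of_real (real_of_int q / real M)) = 1"
    using assms by (simp add: exp_eq_1 field_simps)
qed

lemma sum_exp_int_interval:
  fixes q a :: int
  assumes "M > 0"
  shows "(\<Sum>t\<in>{a..<a + int M}. exp (2 * pi * \<i> * complex_of_real (real_of_int (q * t) / real M)))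
        = (if int M dvd q then of_nat M else 0)"
proof -
  define w where "w = exp (2 * pi * \<i> * complex_of_real (real_of_int (q * a) / real M))"
  define z where "z = exp (2 * pi * \<i> * complex_of_real (real_of_int q / real M))"
  have shift: "exp (2 * pi * \<i> * complex_of_real (real_of_int (q * (a + int s)) / real M)) = w * z ^ s"
    for s :: nat
    unfolding w_def z_def by (simp add: algebra_simps add_divide_distrib flip: exp_add exp_of_nat_mult)
  have "{a..<a + int M} = (\<lambda>s. a + int s) ` {..<M}"
    by (auto simp: image_iff intro!: bexI[of _ "nat (_ - a)"])
  moreover have "inj_on (\<lambda>s. a + int s) {..<M}" by (auto simp: inj_on_def)
  ultimately have "(\<Sum>t\<in>{a..<a + int M}. exp (2 * pi * \<i> * complex_of_real (real_of_int (q * t) / real M)))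
      = (\<Sum>s<M. exp (2 * pi * \<i> * complex_of_real (real_of_int (q * (a + int s)) / real M)))"
    by (simp add: sum.reindex)
  also have "\<dots> = w * (\<Sum>s<M. z ^ s)"
    by (simp only: shift sum_distrib_left)
  also have "\<dots> = (if int M dvd q then of_nat M else 0)"
  proof (cases "int M dvd q")
    case True
    then have "z = 1" "w = 1"
      unfolding z_def w_def exp_2pi_int_div_eq_1_iff[OF assms] by simp_all
    then show ?thesis using True by simp
  next
    case False
    then have "z \<noteq> 1" unfolding z_def exp_2pi_int_div_eq_1_iff[OF assms] .
    moreover have "z ^ M = 1" unfolding z_def using assms
      by (simp add: exp_eq_1 flip: exp_of_nat_mult)
    ultimately show ?thesis using False by (simp add: geometric_sum)
  qed
  finally show ?thesis .
qed

definition ibox :: "int ^ 'd \<Rightarrow> nat \<Rightarrow> (int ^ 'd) set" where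
  "ibox a M = {j. \<forall>i. a $ i \<le> j $ i \<and> j $ i < a $ i + int M}"

lemma ibox_eq_PiE:
  fixes a :: "int ^ 'd"
  shows "ibox a M = vec_lambda ` (PiE UNIV (\<lambda>i. {a $ i..<a $ i + int M}))"
proof (rule set_eqI)
  fix j :: "int ^ 'd"
  show "j \<in> ibox a M \<longleftrightarrow> j \<in> vec_lambda ` (PiE UNIV (\<lambda>i. {a $ i..<a $ i + int M}))"
  proof
    assume "j \<in> ibox a M"
    then have "vec_nth j \<in> PiE UNIV (\<lambda>i. {a $ i..<a $ i + int M})" by (auto simp: ibox_def)
    moreover have "j = vec_lambda (vec_nth j)" by simp
    ultimately show "j \<in> vec_lambda ` (PiE UNIV (\<lambda>i. {a $ i..<a $ i + int M}))" by blast
  next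
    assume "j \<in> vec_lambda ` (PiE UNIV (\<lambda>i. {a $ i..<a $ i + int M}))"
    then show "j \<in> ibox a M" by (auto simp: ibox_def PiE_iff)
  qed
qed

lemma finite_ibox [simp]: "finite (ibox a M)"
  unfolding ibox_eq_PiE by (intro finite_imageI finite_PiE) auto

lemma sum_fchar_ibox:
  fixes a k :: "int ^ 'd"
  assumes "M > 0"
  shows "(\<Sum>j\<in>ibox a M. fchar M k (rvec j))
       = of_nat M ^ CARD('d) * of_bool (\<forall>i. int M dvd k $ i)"
proof -
  define f where "f i t = exp (2 * pi * \<i> * complex_of_real (real_of_int (k $ i * t) / real M))"
    for i t
  have "(\<Sum>j\<in>ibox a M. fchar M k (rvec j)) = (\<Sum>j\<in>ibox a M. \<Prod>i\<in>UNIV. f i (j $ i))"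
    by (simp add: fchar_rvec f_def)
  also have "\<dots> = (\<Sum>g\<in>PiE UNIV (\<lambda>i. {a $ i..<a $ i + int M}). \<Prod>i\<in>UNIV. f i (g i))"
    unfolding ibox_eq_PiE by (subst sum.reindex) (auto simp: inj_on_def vec_lambda_inject)
  also have "\<dots> = (\<Prod>i\<in>UNIV. \<Sum>t\<in>{a $ i..<a $ i + int M}. f i t)"
    by (rule prod_sum_PiE[symmetric]) auto
  also have "\<dots> = (\<Prod>i\<in>UNIV. if int M dvd k $ i then of_nat M else 0)"
    by (simp only: f_def sum_exp_int_interval[OF assms])
  also have "\<dots> = of_nat M ^ CARD('d) * of_bool (\<forall>i. int M dvd k $ i)"
    by (auto simp: prod_constant)
  finally show ?thesis .
qed

lemma has_sum_sum:
  fixes f :: "'a \<Rightarrow> 'b \<Rightarrow> 'c::topological_comm_monoid_add"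
  assumes "finite A" "\<And>n. n \<in> A \<Longrightarrow> (f n has_sum s n) B"
  shows "((\<lambda>k. \<Sum>n\<in>A. f n k) has_sum (\<Sum>n\<in>A. s n)) B"
  using assms by (induction A rule: finite_induct) (auto intro: has_sum_add)

lemma fourier_aliasing:
  fixes a :: "int ^ 'd \<Rightarrow> complex"
  assumes "N > 0" "M > 0"
    and zero: "\<And>x. ((\<lambda>k. a k * fchar N k x) has_sum 0) UNIV"
  shows "((\<lambda>k. a k * of_bool (\<forall>i. int M dvd (k - p) $ i)) has_sum 0) UNIV"
proof -
  have sample: "((\<lambda>k. a k * fchar M (k - p) (rvec j)) has_sum 0) UNIV" for j
  proof -
    have "((\<lambda>k. fchar M (- p) (rvec j) * (a k * fchar M k (rvec j))) has_sum 0) UNIV"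
      using has_sum_cmult_right[OF zero[of "(real N / real M) *\<^sub>R rvec j"]]
      by (simp add: fchar_rescale assms)
    then show ?thesis by (simp add: fchar_diff_freq mult_ac)
  qed
  have "((\<lambda>k. \<Sum>j\<in>ibox 0 M. a k * fchar M (k - p) (rvec j)) has_sum 0) UNIV"
    using has_sum_sum[OF finite_ibox sample] by simp
  then have "((\<lambda>k. of_nat M ^ CARD('d) * (a k * of_bool (\<forall>i. int M dvd (k - p) $ i))) has_sum 0) UNIV"
    by (simp add: sum_fchar_ibox[OF \<open>M > 0\<close>] mult_ac flip: sum_distrib_left)
  then show ?thesis
    using \<open>M > 0\<close> by (simp add: has_sum_cmult_right_iff)
qed

lemma int_vec_bounded:
  fixes A :: "(int ^ 'd) set"
  assumes "finite A"
  obtains K where "K \<ge> 0" "\<And>k i. k \<in> A \<Longrightarrow> \<bar>k $ i\<bar> \<le> K"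
proof
  define K where "K = (\<Sum>k\<in>A. \<Sum>i\<in>UNIV. \<bar>k $ i\<bar>)"
  show "K \<ge> 0" unfolding K_def by (intro sum_nonneg) auto
  show "\<bar>k $ i\<bar> \<le> K" if "k \<in> A" for k i
  proof -
    have "\<bar>k $ i\<bar> \<le> (\<Sum>i\<in>UNIV. \<bar>k $ i\<bar>)" by (rule member_le_sum) auto
    also have "\<dots> \<le> K" unfolding K_def using assms that
      by (intro member_le_sum) (auto intro: sum_nonneg)
    finally show ?thesis .
  qed
qed

lemma int_vec_cong_bounded_eq:
  fixes k l :: "int ^ 'd"
  assumes "\<forall>i. M dvd (k - l) $ i" "\<And>i. \<bar>k $ i\<bar> \<le> K" "\<And>i. \<bar>l $ i\<bar> \<le> K" "2 * K < M"
  shows "k = l"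
proof -
  have "k $ i - l $ i = 0" for i
  proof (rule ccontr)
    assume nz: "k $ i - l $ i \<noteq> 0"
    have "M dvd k $ i - l $ i" using assms(1) by simp
    then have "\<bar>M\<bar> \<le> \<bar>k $ i - l $ i\<bar>" using nz by (rule dvd_imp_le_int[rotated])
    moreover have "\<bar>k $ i - l $ i\<bar> \<le> 2 * K" using assms(2,3)[of i] by linarith
    ultimately show False using assms(4) by linarith
  qed
  then show ?thesis by (simp add: vec_eq_iff)
qed

lemma abs_summable_infsum_small_off_finite:
  fixes f :: "'a \<Rightarrow> 'b::banach"
  assumes "(\<lambda>x. norm (f x)) summable_on UNIV" "e > 0"
  obtains F where "finite F" "\<And>B. B \<inter> F = {} \<Longrightarrow> norm (infsum f B) \<le> e"
proof -
  define g where "g = (\<lambda>x. norm (f x))"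
  have g: "g summable_on UNIV" using assms(1) unfolding g_def .
  obtain F where F: "finite F" "dist (sum g F) (infsum g UNIV) \<le> e"
    using infsum_finite_approximation[OF g \<open>e > 0\<close>] by blast
  have "norm (infsum f B) \<le> e" if "B \<inter> F = {}" for B
  proof -
    have gB: "g summable_on B" using g by (rule summable_on_subset_banach) simp
    have gF: "g summable_on F" using F(1) by simp
    have "sum g F + infsum g B = infsum g (F \<union> B)"
      using infsum_Un_disjoint[OF gF gB] F(1) that by (simp add: Int_commute)
    also have "\<dots> \<le> infsum g UNIV"
      using g gF gB by (intro infsum_mono_neutral) (auto simp: g_def summable_on_union)
    finally have "infsum g B \<le> e" using F(2) by (simp add: dist_real_def)
    moreover have "norm (infsum f B) \<le> infsum g B"
      using norm_infsum_bound[of f B] gB unfolding g_def by simp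
    ultimately show ?thesis by simp
  qed
  with F(1) show ?thesis using that by blast
qed

lemma fourier_coeffs_eq_0:
  fixes a :: "int ^ 'd \<Rightarrow> complex"
  assumes N: "N > 0" and zero: "\<And>x. ((\<lambda>k. a k * fchar N k x) has_sum 0) UNIV"
  shows "a p = 0"
proof -
  have a: "a summable_on UNIV" using zero[of 0] by (auto simp: summable_on_def)
  then have abs: "(\<lambda>k. norm (a k)) summable_on UNIV" by (simp add: summable_on_iff_abs_summable_on_complex)
  have "norm (a p) \<le> e" if "e > 0" for e
  proof -
    obtain F where F: "finite F" "\<And>B. B \<inter> F = {} \<Longrightarrow> norm (infsum a B) \<le> e"
      using abs_summable_infsum_small_off_finite[OF abs \<open>e > 0\<close>] by blast
    obtain K where "K \<ge> 0" and K: "\<And>k i. k \<in> insert p F \<Longrightarrow> \<bar>k $ i\<bar> \<le> K"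
      using int_vec_bounded[of "insert p F"] F(1) by blast
    define M where "M = nat (2 * K + 1)"
    have "M > 0" "2 * K < int M" using \<open>K \<ge> 0\<close> by (auto simp: M_def)
    define B where "B = {k. \<forall>i. int M dvd (k - p) $ i} - {p}"
    have "B \<inter> F = {}"
    proof (rule ccontr)
      assume "B \<inter> F \<noteq> {}"
      then obtain k where "k \<in> F" "\<forall>i. int M dvd (k - p) $ i" "k \<noteq> p"
        unfolding B_def by blast
      moreover have "k = p"
        by (rule int_vec_cong_bounded_eq[OF \<open>\<forall>i. int M dvd (k - p) $ i\<close> K K \<open>2 * K < int M\<close>])
           (use \<open>k \<in> F\<close> in auto)
      ultimately show False by blast
    qed
    have "((\<lambda>k. a k * of_bool (\<forall>i. int M dvd (k - p) $ i)) has_sum 0) UNIV"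
      by (rule fourier_aliasing[OF N \<open>M > 0\<close> zero])
    moreover have "((\<lambda>k. a k * of_bool (\<forall>i. int M dvd (k - p) $ i)) has_sum 0) UNIV
        \<longleftrightarrow> (a has_sum 0) (insert p B)"
      by (rule has_sum_cong_neutral) (auto simp: B_def)
    moreover have "(a has_sum (a p + infsum a B)) (insert p B)"
      using summable_on_subset_banach[OF a, of B] by (intro has_sum_insert) (auto simp: B_def)
    ultimately have "a p + infsum a B = 0"
      using has_sum_unique by blast
    then have "norm (a p) = norm (infsum a B)"
      by (simp add: add_eq_0_iff)
    then show ?thesis using F(2)[OF \<open>B \<inter> F = {}\<close>] by simp
  qed
  then show ?thesis
    using field_le_epsilon[of "norm (a p)" 0] by simp
qed

lemma fourier_coeffs_unique:
  fixes a b :: "int ^ 'd \<Rightarrow> complex"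
  assumes "N > 0"
    and "\<And>x. ((\<lambda>k. a k * fchar N k x) has_sum f x) UNIV"
    and "\<And>x. ((\<lambda>k. b k * fchar N k x) has_sum f x) UNIV"
  shows "a = b"
proof -
  have "((\<lambda>k. (a k - b k) * fchar N k x) has_sum 0) UNIV" for x
    using has_sum_add[OF assms(2)[of x] has_sum_uminusI[OF assms(3)[of x]]]
    by (simp add: algebra_simps)
  from fourier_coeffs_eq_0[OF \<open>N > 0\<close> this] show ?thesis by (simp add: fun_eq_iff)
qed

lemma add_rvec_in_cube_iff:
  "x + rvec n \<in> cube N \<longleftrightarrow> n \<in> ibox (\<chi> i. \<lceil>- x $ i\<rceil>) N"
proof -
  have "0 \<le> x $ i + real_of_int (n $ i) \<and> x $ i + real_of_int (n $ i) < real N \<longleftrightarrow>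
        \<lceil>- x $ i\<rceil> \<le> n $ i \<and> n $ i < \<lceil>- x $ i\<rceil> + int N" for i
    using ceiling_le_iff[of "- x $ i" "n $ i"] less_ceiling_iff[of "n $ i - int N" "- x $ i"]
    by auto
  then show ?thesis by (simp add: cube_def ibox_def rvec_def)
qed

lemma infsum_periodization:
  fixes f :: "real ^ 'd \<Rightarrow> 'a::real_normed_algebra_1"
  shows "(\<Sum>\<^sub>\<infinity>n. f (x + rvec n) * indicator (cube N) (x + rvec n))
     = (\<Sum>n\<in>ibox (\<chi> i. \<lceil>- x $ i\<rceil>) N. f (x + rvec n))"
  by (subst infsum_cong_neutral[where T = "ibox (\<chi> i. \<lceil>- x $ i\<rceil>) N" and g = "\<lambda>n. f (x + rvec n)"])
     (auto simp: add_rvec_in_cube_iff indicator_def)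

lemma periodization_has_sum:
  fixes P :: "complex ^ 'd \<Rightarrow> complex" and c :: "int ^ 'd \<Rightarrow> complex"
  assumes N: "N > 0" and P: "\<And>x. ((\<lambda>k. c k * fchar N k x) has_sum P (cvec x)) UNIV"
  shows "((\<lambda>k. (of_nat N ^ CARD('d) * of_bool (\<forall>i. int N dvd k $ i) * c k) * fchar N k x) has_sum
          (\<Sum>\<^sub>\<infinity>n. P (cvec (x + rvec n)) * indicator (cube N) (x + rvec n))) UNIV"
proof -
  let ?I = "ibox (\<chi> i. \<lceil>- x $ i\<rceil>) N"
  have "((\<lambda>k. \<Sum>n\<in>?I. c k * fchar N k (x + rvec n)) has_sum (\<Sum>n\<in>?I. P (cvec (x + rvec n)))) UNIV"
    by (rule has_sum_sum[OF finite_ibox P])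
  moreover have "(\<Sum>n\<in>?I. c k * fchar N k (x + rvec n))
      = (of_nat N ^ CARD('d) * of_bool (\<forall>i. int N dvd k $ i) * c k) * fchar N k x" for k
    by (simp add: fchar_add sum_fchar_ibox[OF N] mult_ac flip: sum_distrib_left)
  ultimately show ?thesis
    using infsum_periodization[of "\<lambda>y. P (cvec y)" x N] by simp
qed

theorem corollary2p3:
  fixes P :: "complex ^ 'd \<Rightarrow> complex"
    and c :: "int ^ 'd \<Rightarrow> complex"
    and N :: nat
  assumes "CARD('d) \<ge> 2"
    and "N > 0"
    and "entire_fun P"
    and "lattice_periodic N P"
    and "\<And>x. ((\<lambda>k. c k * fchar N k x) has_sum P (cvec x)) UNIV"
  shows "(\<forall>x :: real ^ 'd.
            (\<Sum>\<^sub>\<infinity>n :: int ^ 'd. P (cvec (x + rvec n)) * indicator (cube N) (x + rvec n)) = 1)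
         \<longleftrightarrow> (\<forall>k :: int ^ 'd. (\<forall>i. int N dvd k $ i) \<longrightarrow>
                 c k = (if k = 0 then 1 / of_nat N ^ CARD('d) else 0))"
proof -
  define S where "S x = (\<Sum>\<^sub>\<infinity>n :: int ^ 'd. P (cvec (x + rvec n)) * indicator (cube N) (x + rvec n))"
    for x
  define a where "a k = of_nat N ^ CARD('d) * of_bool (\<forall>i. int N dvd k $ i) * c k" for k
  define \<delta> :: "int ^ 'd \<Rightarrow> complex" where "\<delta> k = of_bool (k = 0)" for k
  have S: "((\<lambda>k. a k * fchar N k x) has_sum S x) UNIV" for x
    unfolding a_def S_def using periodization_has_sum[OF assms(2,5)] .
  have \<delta>: "((\<lambda>k. \<delta> k * fchar N k x) has_sum 1) UNIV" for x
    by (subst has_sum_cong_neutral[where T = "{0}"]) (auto simp: \<delta>_def intro!: has_sum_finiteI)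
  have "(\<forall>x. S x = 1) \<longleftrightarrow> a = \<delta>"
    using fourier_coeffs_unique[OF assms(2) _ \<delta>] S \<delta> has_sum_unique by metis
  also have "\<dots> \<longleftrightarrow> (\<forall>k. (\<forall>i. int N dvd k $ i) \<longrightarrow> c k = (if k = 0 then 1 / of_nat N ^ CARD('d) else 0))"
    using \<open>N > 0\<close> by (auto simp: fun_eq_iff a_def \<delta>_def field_simps)
  finally show ?thesis unfolding S_def .
qed

end
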